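(* Let $\pi=\sigma[\alpha_1,\dots,\alpha_m]$ be an involution, where $\sigma$ is a simple permutation of length $m\ge 4$ and $\alpha_1,\dots,\alpha_m$ are nonempty permutations. Then $\sigma$ is an involution and $\alpha_i=\alpha_{\sigma(i)}^{-1}$ for all $i\in[m]$.
   Context: An interval of $\pi\in S_n$ is a set of contiguous indices $[a,b]$ whose image under $\pi$ is a set of consecutive integers; $\pi$ is simple if its only intervals have size $0$, $1$, or $n$. For $\sigma\in S_m$ and nonempty permutations $\alpha_1,\dots,\alpha_m$, the inflation $\sigma[\alpha_1,\dots,\alpha_m]$ is the permutation obtained by replacing each entry $\sigma(i)$ by an interval (contiguous positions, consecutive values) order-isomorphic to $\alpha_i$. An involution is a permutation equal to its own inverse. *)

theory Defs
  imports "HOL-Combinatorics.Permutations"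
begin

text \<open>Conventions: a permutation of length n is a function p with p permutes {..<n}
  (positions and values are 0-based, i.e. [n] is represented by {0,...,n-1}).\<close>

definition is_interval :: "(nat \<Rightarrow> nat) \<Rightarrow> nat \<Rightarrow> nat \<Rightarrow> bool" where
  "is_interval p a b \<longleftrightarrow> a \<le> b \<and> (\<exists>c. p ` {a..b} = {c..c + (b - a)})"

definition simple_perm :: "nat \<Rightarrow> (nat \<Rightarrow> nat) \<Rightarrow> bool" where
  "simple_perm n p \<longleftrightarrow> p permutes {..<n} \<and>
     (\<forall>a b. b < n \<and> is_interval p a b \<longrightarrow> a = b \<or> (a = 0 \<and> b = n - 1))"

definition involution :: "(nat \<Rightarrow> nat) \<Rightarrow> bool" where
  "involution p \<longleftrightarrow> inv p = p"

text \<open>Block i of the inflation occupies positions blk_start l i, ..., blk_start l (i+1) - 1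
  and values val_start m sigma l i, ..., val_start m sigma l i + l i - 1.\<close>

definition blk_start :: "(nat \<Rightarrow> nat) \<Rightarrow> nat \<Rightarrow> nat" where
  "blk_start l i = (\<Sum>j<i. l j)"

definition val_start :: "nat \<Rightarrow> (nat \<Rightarrow> nat) \<Rightarrow> (nat \<Rightarrow> nat) \<Rightarrow> nat \<Rightarrow> nat" where
  "val_start m \<sigma> l i = (\<Sum>j\<in>{j. j < m \<and> \<sigma> j < \<sigma> i}. l j)"

text \<open>inflation m sigma l alpha = sigma[alpha_0,...,alpha_{m-1}], where alpha i is a
  permutation of length l i.\<close>

definition inflation ::
  "nat \<Rightarrow> (nat \<Rightarrow> nat) \<Rightarrow> (nat \<Rightarrow> nat) \<Rightarrow> (nat \<Rightarrow> nat \<Rightarrow> nat) \<Rightarrow> nat \<Rightarrow> nat" where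
  "inflation m \<sigma> l \<alpha> = (\<lambda>x.
     if x < blk_start l m then
       (let i = (THE i. i < m \<and> blk_start l i \<le> x \<and> x < blk_start l (Suc i))
        in val_start m \<sigma> l i + \<alpha> i (x - blk_start l i))
     else x)"

end

theory Submission
  imports Defs
begin

text \<open>
  Let \<open>\<pi> = \<sigma>[\<alpha>]\<close>, with position blocks \<open>B i\<close> and value blocks \<open>V i = \<pi> ` B i\<close>.
  If \<open>\<sigma>\<close> is simple, every interval \<open>X\<close> of \<open>\<pi>\<close> (contiguous positions with contiguous
  image) lies in a single block or is everything: the blocks met by \<open>X\<close> form an interval
  of \<open>\<sigma>\<close>, hence are all blocks, and then the two end blocks are covered too, because a
  simple \<open>\<sigma>\<close> takes no extreme value at either end. As \<open>\<pi>\<close> is an involution,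
  \<open>\<pi> ` V i = B i\<close>, so each \<open>V i\<close> is an interval of \<open>\<pi>\<close>; this forces \<open>V i = B (f i)\<close>
  for an involution \<open>f\<close>. Value blocks are ordered by \<open>\<sigma>\<close> and position blocks by index,
  so \<open>\<sigma> \<circ> f\<close> is increasing, i.e. \<open>\<sigma> = f\<close>; reading \<open>\<pi>\<close> twice on \<open>B i\<close> then gives
  \<open>\<alpha> (\<sigma> i) \<circ> \<alpha> i = id\<close>.
\<close>

definition contiguous :: "nat set \<Rightarrow> bool" where
  "contiguous X \<longleftrightarrow> (\<forall>x\<in>X. \<forall>z\<in>X. {x..z} \<subseteq> X)"

lemma contiguous_atLeastLessThan: "contiguous {a..<b}"
  by (auto simp: contiguous_def)

lemma contiguousD: "contiguous X \<Longrightarrow> x \<in> X \<Longrightarrow> z \<in> X \<Longrightarrow> x \<le> y \<Longrightarrow> y \<le> z \<Longrightarrow> y \<in> X"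
  unfolding contiguous_def by (meson atLeastAtMost_iff subsetD)

lemma contiguous_eq_atLeastAtMost:
  assumes "finite X" "X \<noteq> {}" "contiguous X"
  shows "X = {Min X..Max X}"
proof
  show "{Min X..Max X} \<subseteq> X"
    using assms by (simp add: contiguous_def)
qed (use assms in auto)

lemma contiguous_lessThan_remove_end:
  assumes "a = 0 \<or> a = m - 1"
  shows "contiguous ({..<m} - {a})"
  using assms by (auto simp: contiguous_def)

lemma strict_mono_on_lessThan_fixed:
  fixes g :: "nat \<Rightarrow> nat"
  assumes mono: "strict_mono_on {..<m} g" and into: "g ` {..<m} \<subseteq> {..<m}" and "i < m"
  shows "g i = i"
proof -
  have lower: "j \<le> g j" if "j < m" for j
    using that
  proof (induction j)
    case (Suc j)
    then show ?case using strict_mono_onD[OF mono, of j "Suc j"] by simp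
  qed simp
  have upper: "g i + k \<le> g (i + k)" if "i + k < m" for k
    using that
  proof (induction k)
    case (Suc k)
    then show ?case using strict_mono_onD[OF mono, of "i + k" "i + Suc k"] by simp
  qed simp
  have "g (i + (m - 1 - i)) < m" using into \<open>i < m\<close> by (simp add: image_subset_iff)
  then have "g i \<le> i" using upper[of "m - 1 - i"] \<open>i < m\<close> by simp
  then show ?thesis using lower[OF \<open>i < m\<close>] by simp
qed

lemma simple_perm_contiguous:
  assumes "simple_perm m \<sigma>" "J \<subseteq> {..<m}" "contiguous J" "contiguous (\<sigma> ` J)"
  shows "card J \<le> 1 \<or> J = {..<m}"
proof (cases "J = {}")
  case False
  have perm: "\<sigma> permutes {..<m}" using assms(1) by (simp add: simple_perm_def)
  have fin: "finite J" using assms(2) finite_subset by blast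
  define a b where "a = Min J" and "b = Max J"
  have J: "J = {a..b}" unfolding a_def b_def
    using contiguous_eq_atLeastAtMost[OF fin False assms(3)] .
  define c d where "c = Min (\<sigma> ` J)" and "d = Max (\<sigma> ` J)"
  have img: "\<sigma> ` J = {c..d}" unfolding c_def d_def
    using contiguous_eq_atLeastAtMost[OF finite_imageI[OF fin] _ assms(4)] False by simp
  have "card {c..d} = card {a..b}"
    using img J permutes_inj[OF perm] by (metis card_image inj_on_subset subset_UNIV)
  moreover have "a \<le> b" "c \<le> d"
    using J img False by (metis atLeastatMost_empty_iff image_is_empty)+
  ultimately have "\<sigma> ` {a..b} = {c..c + (b - a)}"
    using img J by simp
  then have "is_interval \<sigma> a b"
    using J False by (auto simp: is_interval_def)
  moreover have "b < m" using J False assms(2) by auto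
  ultimately have "a = b \<or> (a = 0 \<and> b = m - 1)"
    using assms(1) by (simp add: simple_perm_def)
  then show ?thesis using J \<open>b < m\<close> by auto
qed simp

lemma simple_perm_end_not_extreme:
  assumes simple: "simple_perm m \<sigma>" and "2 < m" and endpoint: "a = 0 \<or> a = m - 1"
  shows "0 < \<sigma> a \<and> \<sigma> a < m - 1"
proof (rule ccontr)
  assume extreme: "\<not> (0 < \<sigma> a \<and> \<sigma> a < m - 1)"
  have perm: "\<sigma> permutes {..<m}" using simple by (simp add: simple_perm_def)
  have "\<sigma> ` ({..<m} - {a}) = {..<m} - {\<sigma> a}"
    using permutes_image[OF perm] permutes_inj[OF perm] by (simp add: image_set_diff)
  moreover have "\<sigma> a = 0 \<or> \<sigma> a = m - 1"
    using extreme permutes_in_image[OF perm, of a] endpoint \<open>2 < m\<close> by auto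
  ultimately have "contiguous (\<sigma> ` ({..<m} - {a}))"
    using contiguous_lessThan_remove_end by metis
  then have "card ({..<m} - {a}) \<le> 1 \<or> {..<m} - {a} = {..<m}"
    using simple_perm_contiguous[OF simple _ contiguous_lessThan_remove_end[OF endpoint]] by blast
  moreover have "a \<in> {..<m}" using endpoint \<open>2 < m\<close> by auto
  ultimately show False using \<open>2 < m\<close> by (auto simp: card_Diff_singleton)
qed

lemma blk_start_Suc: "blk_start l (Suc i) = blk_start l i + l i"
  by (simp add: blk_start_def)

lemma blk_start_mono: "i \<le> j \<Longrightarrow> blk_start l i \<le> blk_start l j"
  unfolding blk_start_def by (rule sum_mono2) auto

lemma blk_start_cover:
  "x < blk_start l n \<Longrightarrow> \<exists>i<n. blk_start l i \<le> x \<and> x < blk_start l (Suc i)"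
proof (induction n)
  case (Suc n)
  then show ?case by (cases "x < blk_start l n") (auto intro: less_SucI)
qed (simp add: blk_start_def)

lemma inflation_blk_start_add:
  assumes "i < m" "k < l i"
  shows "inflation m \<sigma> l \<alpha> (blk_start l i + k) = val_start m \<sigma> l i + \<alpha> i k"
proof -
  let ?x = "blk_start l i + k"
  have in_block: "blk_start l i \<le> ?x \<and> ?x < blk_start l (Suc i)"
    using assms(2) by (simp add: blk_start_Suc)
  have unique: "j = i" if "blk_start l j \<le> ?x" "?x < blk_start l (Suc j)" for j
  proof (rule linorder_cases[of i j])
    assume "i < j"
    then show ?thesis using that in_block blk_start_mono[of "Suc i" j l] by simp
  next
    assume "i = j"
    then show ?thesis by simp
  next
    assume "j < i"
    then show ?thesis using that in_block blk_start_mono[of "Suc j" i l] by simp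
  qed
  have "(THE j. j < m \<and> blk_start l j \<le> ?x \<and> ?x < blk_start l (Suc j)) = i"
    using assms(1) in_block unique by (intro the_equality) auto
  moreover have "?x < blk_start l m"
    using in_block blk_start_mono[of "Suc i" m l] assms(1) by simp
  ultimately show ?thesis by (simp add: inflation_def)
qed

locale inflation_data =
  fixes m :: nat and \<sigma> :: "nat \<Rightarrow> nat" and l :: "nat \<Rightarrow> nat" and \<alpha> :: "nat \<Rightarrow> nat \<Rightarrow> nat"
  assumes \<sigma>_permutes: "\<sigma> permutes {..<m}"
    and length_pos: "i < m \<Longrightarrow> 0 < l i"
    and \<alpha>_permutes: "i < m \<Longrightarrow> \<alpha> i permutes {..<l i}"
begin

abbreviation "\<pi> \<equiv> inflation m \<sigma> l \<alpha>"
abbreviation "s \<equiv> blk_start l"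
abbreviation "v \<equiv> val_start m \<sigma> l"
abbreviation "N \<equiv> blk_start l m"

definition pos_block :: "nat \<Rightarrow> nat set" where
  "pos_block i = {s i..<s i + l i}"

definition val_block :: "nat \<Rightarrow> nat set" where
  "val_block i = {v i..<v i + l i}"

lemma \<sigma>_less: "i < m \<Longrightarrow> \<sigma> i < m"
  using permutes_in_image[OF \<sigma>_permutes] by simp

lemma val_start_add_le_val_start:
  assumes "i < m" "j < m" "\<sigma> i < \<sigma> j"
  shows "v i + l i \<le> v j"
proof -
  have "v i + l i = (\<Sum>t\<in>insert i {t. t < m \<and> \<sigma> t < \<sigma> i}. l t)"
    by (simp add: val_start_def)
  also have "\<dots> \<le> v j"
    unfolding val_start_def by (rule sum_mono2) (use assms in auto)
  finally show ?thesis .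
qed

lemma val_start_add_le: "i < m \<Longrightarrow> v i + l i \<le> N"
proof -
  assume "i < m"
  then have "v i + l i = (\<Sum>t\<in>insert i {t. t < m \<and> \<sigma> t < \<sigma> i}. l t)"
    by (simp add: val_start_def)
  also have "\<dots> \<le> N"
    unfolding blk_start_def by (rule sum_mono2) (use \<open>i < m\<close> in auto)
  finally show ?thesis .
qed

lemma start_in_pos_block: "i < m \<Longrightarrow> s i \<in> pos_block i"
  using length_pos by (simp add: pos_block_def)

lemma start_in_val_block: "i < m \<Longrightarrow> v i \<in> val_block i"
  using length_pos by (simp add: val_block_def)

lemma blk_start_strict_mono: "i < j \<Longrightarrow> i < m \<Longrightarrow> s i < s j"
  using blk_start_mono[of "Suc i" j l] length_pos[of i] by (simp add: blk_start_Suc)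

lemma val_block_subset: "i < m \<Longrightarrow> val_block i \<subseteq> {..<N}"
  using val_start_add_le by (fastforce simp: val_block_def)

lemma pos_block_cover: "x < N \<Longrightarrow> \<exists>i<m. x \<in> pos_block i"
  using blk_start_cover[of x l m] by (auto simp: pos_block_def blk_start_Suc)

lemma pos_blocks_disjoint: "i \<noteq> j \<Longrightarrow> pos_block i \<inter> pos_block j = {}"
  using blk_start_mono[of "Suc i" j l] blk_start_mono[of "Suc j" i l]
  by (cases "i < j") (auto simp: pos_block_def blk_start_Suc)

lemma val_blocks_disjoint:
  assumes "i < m" "j < m" "i \<noteq> j"
  shows "val_block i \<inter> val_block j = {}"
proof -
  have "\<sigma> i \<noteq> \<sigma> j" using assms permutes_inj[OF \<sigma>_permutes] by (auto dest: injD)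
  then show ?thesis
    using assms val_start_add_le_val_start[of i j] val_start_add_le_val_start[of j i]
    by (cases "\<sigma> i < \<sigma> j") (auto simp: val_block_def)
qed

lemma val_start_less_iff:
  assumes "i < m" "j < m"
  shows "v i < v j \<longleftrightarrow> \<sigma> i < \<sigma> j"
proof
  show "\<sigma> i < \<sigma> j \<Longrightarrow> v i < v j"
    using val_start_add_le_val_start[OF assms] length_pos[OF assms(1)] by simp
  assume "v i < v j"
  moreover have "\<not> \<sigma> j < \<sigma> i"
    using val_start_add_le_val_start[OF assms(2,1)] \<open>v i < v j\<close> by auto
  moreover have "i \<noteq> j" using \<open>v i < v j\<close> by auto
  ultimately show "\<sigma> i < \<sigma> j"
    using permutes_inj[OF \<sigma>_permutes] by (metis injD linorder_neqE_nat)
qed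

lemma val_block_eq_pos_blockD:
  assumes "i < m" "val_block i = pos_block j"
  shows "v i = s j" "l j = l i"
proof -
  show "l j = l i"
    using arg_cong[OF assms(2), of card] by (simp add: val_block_def pos_block_def)
  then show "v i = s j"
    using assms length_pos[OF assms(1)] atLeastLessThan_inj(1)[of "v i" "v i + l i" "s j" "s j + l j"]
    by (simp add: val_block_def pos_block_def)
qed

lemma pos_block_inj: "i < m \<Longrightarrow> pos_block i = pos_block j \<Longrightarrow> i = j"
  using start_in_pos_block pos_blocks_disjoint by blast

lemma image_pos_block:
  assumes "i < m"
  shows "\<pi> ` pos_block i = val_block i"
proof -
  have "\<pi> ` pos_block i = \<pi> ` (\<lambda>k. s i + k) ` {..<l i}"
    by (simp add: pos_block_def atLeast0LessThan[symmetric] add.commute)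
  also have "\<dots> = (\<lambda>k. v i + k) ` \<alpha> i ` {..<l i}"
    using inflation_blk_start_add[OF assms] by (simp add: image_image)
  also have "\<dots> = val_block i"
    using permutes_image[OF \<alpha>_permutes[OF assms]]
    by (simp add: val_block_def atLeast0LessThan[symmetric] add.commute)
  finally show ?thesis .
qed

lemma inflation_permutes: "\<pi> permutes {..<N}"
proof (rule bij_imp_permutes)
  have "inj_on \<pi> {..<N}"
  proof (rule inj_onI)
    fix x y assume "x \<in> {..<N}" "y \<in> {..<N}" and eq: "\<pi> x = \<pi> y"
    then obtain i j where ij: "i < m" "x \<in> pos_block i" "j < m" "y \<in> pos_block j"
      using pos_block_cover by (metis lessThan_iff)
    then have "\<pi> x \<in> val_block i" "\<pi> y \<in> val_block j"
      using image_pos_block by blast+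
    then have "i = j" using val_blocks_disjoint[OF ij(1,3)] eq by (metis disjoint_iff)
    define k k' where "k = x - s i" and "k' = y - s i"
    have "k < l i" "x = s i + k" "k' < l i" "y = s i + k'"
      using ij \<open>i = j\<close> by (auto simp: pos_block_def k_def k'_def)
    then show "x = y"
      using eq inflation_blk_start_add[OF \<open>i < m\<close>] permutes_inj[OF \<alpha>_permutes[OF \<open>i < m\<close>]]
      by (auto dest: injD)
  qed
  moreover have "\<pi> x \<in> {..<N}" if x: "x \<in> {..<N}" for x
  proof -
    obtain i where "i < m" "x \<in> pos_block i" using pos_block_cover x by auto
    then show ?thesis using image_pos_block val_block_subset by blast
  qed
  ultimately show "bij_betw \<pi> {..<N} {..<N}"
    by (simp add: bij_betw_def endo_inj_surj image_subset_iff)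
qed (simp add: inflation_def)

definition blocks_meeting :: "nat set \<Rightarrow> nat set" where
  "blocks_meeting X = {t. t < m \<and> X \<inter> pos_block t \<noteq> {}}"

lemma contiguous_blocks_meeting:
  assumes "contiguous X"
  shows "contiguous (blocks_meeting X)"
  unfolding contiguous_def
proof (intro ballI subsetI)
  fix p q t
  assume p: "p \<in> blocks_meeting X" and q: "q \<in> blocks_meeting X" and t: "t \<in> {p..q}"
  show "t \<in> blocks_meeting X"
  proof (cases "t = p")
    case False
    obtain x w where x: "x \<in> X" "x \<in> pos_block p" and w: "w \<in> X" "w \<in> pos_block q"
      using p q by (auto simp: blocks_meeting_def)
    have "x \<le> s t"
      using x(2) False t blk_start_mono[of "Suc p" t l] by (auto simp: pos_block_def blk_start_Suc)
    moreover have "s t \<le> w"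
      using w(2) t blk_start_mono[of t q l] by (auto simp: pos_block_def)
    ultimately have "s t \<in> X" using contiguousD[OF assms x(1) w(1)] by simp
    moreover have "t < m" using t q by (auto simp: blocks_meeting_def)
    ultimately show ?thesis using start_in_pos_block by (auto simp: blocks_meeting_def)
  qed (use p in simp)
qed

lemma contiguous_image_blocks_meeting:
  assumes "contiguous (\<pi> ` X)"
  shows "contiguous (\<sigma> ` blocks_meeting X)"
  unfolding contiguous_def
proof (intro ballI subsetI)
  fix p' q' r
  assume "p' \<in> \<sigma> ` blocks_meeting X" "q' \<in> \<sigma> ` blocks_meeting X" and r: "r \<in> {p'..q'}"
  then obtain p q where p: "p \<in> blocks_meeting X" "p' = \<sigma> p"
    and q: "q \<in> blocks_meeting X" "q' = \<sigma> q"
    by blast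
  have "r < m" using r q \<sigma>_less[of q] by (auto simp: blocks_meeting_def)
  then obtain t where t: "t < m" "r = \<sigma> t"
    using permutes_image[OF \<sigma>_permutes] by (metis imageE lessThan_iff)
  show "r \<in> \<sigma> ` blocks_meeting X"
  proof (cases "t = p \<or> t = q")
    case False
    then have "\<sigma> p < \<sigma> t" "\<sigma> t < \<sigma> q"
      using r p q t permutes_inj[OF \<sigma>_permutes] by (auto simp: le_less dest: injD)
    obtain x w where x: "x \<in> X" "x \<in> pos_block p" and w: "w \<in> X" "w \<in> pos_block q"
      using p q by (auto simp: blocks_meeting_def)
    have "\<pi> x \<in> val_block p" "\<pi> w \<in> val_block q" "\<pi> (s t) \<in> val_block t"
      using x w p q t image_pos_block start_in_pos_block by (auto simp: blocks_meeting_def)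
    then have "\<pi> x \<le> \<pi> (s t)" "\<pi> (s t) \<le> \<pi> w"
      using val_start_add_le_val_start[of p t] val_start_add_le_val_start[of t q]
        \<open>\<sigma> p < \<sigma> t\<close> \<open>\<sigma> t < \<sigma> q\<close> p q t by (auto simp: val_block_def blocks_meeting_def)
    then have "\<pi> (s t) \<in> \<pi> ` X"
      using contiguousD[OF assms] x(1) w(1) by blast
    then have "s t \<in> X"
      using permutes_inj[OF inflation_permutes] by (simp add: inj_image_mem_iff)
    then show ?thesis
      using t start_in_pos_block by (auto simp: blocks_meeting_def)
  qed (use p q t in auto)
qed

lemma pos_block_subset_if_meets_all:
  assumes simple: "simple_perm m \<sigma>" and "2 < m"
    and X: "contiguous X" and \<pi>X: "contiguous (\<pi> ` X)"
    and all: "blocks_meeting X = {..<m}" and "t < m"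
  shows "pos_block t \<subseteq> X"
proof (cases "t = 0 \<or> t = m - 1")
  case False
  have "0 \<in> blocks_meeting X" "m - 1 \<in> blocks_meeting X" using all \<open>2 < m\<close> by auto
  then obtain x w where x: "x \<in> X" "x \<in> pos_block 0" and w: "w \<in> X" "w \<in> pos_block (m - 1)"
    by (auto simp: blocks_meeting_def)
  have "x < s 1" "s (Suc t) \<le> s (m - 1)" "s (m - 1) \<le> w"
    using x(2) w(2) False \<open>t < m\<close> blk_start_mono[of "Suc t" "m - 1" l]
    by (auto simp: pos_block_def blk_start_Suc)
  moreover have "s 1 \<le> s t" using False by (simp add: blk_start_mono)
  ultimately show ?thesis
    using contiguousD[OF X x(1) w(1)] by (auto simp: pos_block_def blk_start_Suc)
next
  case True
  then have \<sigma>t: "0 < \<sigma> t" "\<sigma> t < m - 1"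
    using simple_perm_end_not_extreme[OF simple \<open>2 < m\<close>] by auto
  define p q where "p = inv \<sigma> 0" and "q = inv \<sigma> (m - 1)"
  have pq: "p < m" "\<sigma> p = 0" "q < m" "\<sigma> q = m - 1"
    using \<open>2 < m\<close> permutes_inverses[OF \<sigma>_permutes] permutes_in_image[OF permutes_inv[OF \<sigma>_permutes]]
    by (auto simp: p_def q_def)
  have "p \<in> blocks_meeting X" "q \<in> blocks_meeting X" using all pq by auto
  then obtain x w where x: "x \<in> X" "x \<in> pos_block p" and w: "w \<in> X" "w \<in> pos_block q"
    by (auto simp: blocks_meeting_def)
  have "\<pi> x \<in> val_block p" "\<pi> w \<in> val_block q"
    using x(2) w(2) pq image_pos_block by blast+
  then have "\<pi> x < v t" "v t + l t \<le> \<pi> w"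
    using val_start_add_le_val_start[of p t] val_start_add_le_val_start[of t q] pq \<sigma>t \<open>t < m\<close>
    by (auto simp: val_block_def)
  then have "val_block t \<subseteq> \<pi> ` X"
    using contiguousD[OF \<pi>X imageI[OF x(1)] imageI[OF w(1)]] by (auto simp: val_block_def)
  then have "\<pi> ` pos_block t \<subseteq> \<pi> ` X"
    using image_pos_block[OF \<open>t < m\<close>] by simp
  then show ?thesis
    using permutes_inj[OF inflation_permutes] by (simp add: inj_image_subset_iff)
qed

lemma contiguous_subset_pos_block_or_all:
  assumes simple: "simple_perm m \<sigma>" and "2 < m"
    and "X \<subseteq> {..<N}" and X: "contiguous X" and \<pi>X: "contiguous (\<pi> ` X)"
  shows "(\<exists>j<m. X \<subseteq> pos_block j) \<or> X = {..<N}"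
proof -
  have in_block: "\<exists>t\<in>blocks_meeting X. y \<in> pos_block t" if "y \<in> X" for y
    using that \<open>X \<subseteq> {..<N}\<close> pos_block_cover by (fastforce simp: blocks_meeting_def)
  have "card (blocks_meeting X) \<le> 1 \<or> blocks_meeting X = {..<m}"
    using simple_perm_contiguous[OF simple _ contiguous_blocks_meeting[OF X]
        contiguous_image_blocks_meeting[OF \<pi>X]]
    by (auto simp: blocks_meeting_def)
  then show ?thesis
  proof
    assume card: "card (blocks_meeting X) \<le> 1"
    show ?thesis
    proof (cases "X = {}")
      case False
      then obtain j where j: "j \<in> blocks_meeting X" using in_block by blast
      have "finite (blocks_meeting X)" by (simp add: blocks_meeting_def)
      then have "X \<subseteq> pos_block j"
        using in_block j card by (metis card_le_Suc0_iff_eq One_nat_def subsetI)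
      then show ?thesis using j by (auto simp: blocks_meeting_def)
    qed (use \<open>2 < m\<close> in auto)
  next
    assume "blocks_meeting X = {..<m}"
    then have "{..<N} \<subseteq> X"
      using pos_block_cover pos_block_subset_if_meets_all[OF simple \<open>2 < m\<close> X \<pi>X] by blast
    then show ?thesis using \<open>X \<subseteq> {..<N}\<close> by auto
  qed
qed

end

locale simple_involutive_inflation = inflation_data +
  assumes simple: "simple_perm m \<sigma>" and length_gt_2: "2 < m"
    and involutive: "involution (inflation m \<sigma> l \<alpha>)"
begin

lemma inflation_inflation [simp]: "\<pi> (\<pi> x) = x"
  using permutes_inverses(1)[OF inflation_permutes, of x] involutive
  by (simp add: involution_def)

lemma image_val_block:
  assumes "i < m"
  shows "\<pi> ` val_block i = pos_block i"
proof -
  have "\<pi> ` val_block i = \<pi> ` \<pi> ` pos_block i" using image_pos_block[OF assms] by simp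
  also have "\<dots> = pos_block i" by (simp add: image_image)
  finally show ?thesis .
qed

lemma length_less_N: "i < m \<Longrightarrow> l i < N"
proof -
  assume "i < m"
  define i' :: nat where "i' = (if i = 0 then 1 else 0)"
  have "i' < m" "i' \<noteq> i" using length_gt_2 by (auto simp: i'_def)
  then have "l i + l i' \<le> N"
    using \<open>i < m\<close> sum_mono2[of "{..<m}" "{i, i'}" l] by (simp add: blk_start_def)
  then show ?thesis using length_pos[OF \<open>i' < m\<close>] by simp
qed

lemma val_block_subset_pos_block: "i < m \<Longrightarrow> \<exists>j<m. val_block i \<subseteq> pos_block j"
proof -
  assume "i < m"
  have "card (val_block i) \<noteq> card {..<N}"
    using length_less_N[OF \<open>i < m\<close>] by (simp add: val_block_def)
  then have "val_block i \<noteq> {..<N}" by metis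
  moreover have "contiguous (val_block i)" "contiguous (\<pi> ` val_block i)"
    using image_val_block[OF \<open>i < m\<close>]
    by (simp_all add: val_block_def pos_block_def contiguous_atLeastLessThan)
  ultimately show ?thesis
    using contiguous_subset_pos_block_or_all[OF simple length_gt_2 val_block_subset[OF \<open>i < m\<close>]]
    by blast
qed

lemma val_block_pairing:
  obtains f where "\<And>i. i < m \<Longrightarrow> f i < m \<and> val_block i = pos_block (f i) \<and> f (f i) = i"
proof -
  obtain f where f: "\<And>i. i < m \<Longrightarrow> f i < m \<and> val_block i \<subseteq> pos_block (f i)"
    using val_block_subset_pos_block by metis
  have pos_sub: "pos_block i \<subseteq> val_block (f i)" if "i < m" for i
  proof -
    have "pos_block i = \<pi> ` val_block i" using image_val_block[OF that] by simp
    also have "\<dots> \<subseteq> \<pi> ` pos_block (f i)" using f[OF that] by blast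
    also have "\<dots> = val_block (f i)" using image_pos_block f[OF that] by simp
    finally show ?thesis .
  qed
  have ff: "f (f i) = i" if "i < m" for i
  proof -
    have "v i \<in> val_block (f (f i))"
      using start_in_val_block[OF that] f[OF that] pos_sub[of "f i"] by blast
    then show ?thesis
      using val_blocks_disjoint start_in_val_block[OF that] f that by blast
  qed
  have "val_block i = pos_block (f i)" if "i < m" for i
    using f[OF that] pos_sub[of "f i"] ff[OF that] f[OF that] by auto
  then show ?thesis using that f ff by blast
qed

lemma val_block_eq_pos_block: "i < m \<Longrightarrow> val_block i = pos_block (\<sigma> i)"
proof -
  obtain f where f: "\<And>i. i < m \<Longrightarrow> f i < m \<and> val_block i = pos_block (f i) \<and> f (f i) = i"
    using val_block_pairing by blast
  have start: "v (f i) = s i" if "i < m" for i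
    using val_block_eq_pos_blockD(1) f[OF that] f[of "f i"] by metis
  have "strict_mono_on {..<m} (\<sigma> \<circ> f)"
  proof (rule strict_mono_onI)
    fix i j assume "i \<in> {..<m}" "j \<in> {..<m}" "i < j"
    then have "v (f i) < v (f j)" using start blk_start_strict_mono by simp
    then show "(\<sigma> \<circ> f) i < (\<sigma> \<circ> f) j"
      using val_start_less_iff f \<open>i \<in> {..<m}\<close> \<open>j \<in> {..<m}\<close> by simp
  qed
  moreover have "(\<sigma> \<circ> f) ` {..<m} \<subseteq> {..<m}" using f \<sigma>_less by auto
  ultimately have "\<sigma> (f i) = i" if "i < m" for i
    using strict_mono_on_lessThan_fixed that by (metis comp_apply)
  then have "\<sigma> i = f i" if "i < m" for i
    using f[OF that] by metis
  then show "val_block i = pos_block (\<sigma> i)" if "i < m" using f that by simp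
qed

lemma \<sigma>_\<sigma>: "\<sigma> (\<sigma> i) = i"
proof (cases "i < m")
  case True
  have "pos_block (\<sigma> (\<sigma> i)) = val_block (\<sigma> i)"
    using val_block_eq_pos_block[OF \<sigma>_less[OF True]] by simp
  also have "\<dots> = \<pi> ` val_block i"
    using image_pos_block[OF \<sigma>_less[OF True]] val_block_eq_pos_block[OF True] by simp
  also have "\<dots> = pos_block i" using image_val_block[OF True] .
  finally show ?thesis using pos_block_inj[OF True] by metis
qed (simp add: permutes_not_in[OF \<sigma>_permutes])

lemma involution_\<sigma>: "involution \<sigma>"
proof -
  have "\<sigma> \<circ> \<sigma> = id" by (simp add: fun_eq_iff \<sigma>_\<sigma>)
  then show ?thesis using inv_unique_comp by (metis involution_def)
qed

lemma length_\<sigma>: "i < m \<Longrightarrow> l (\<sigma> i) = l i"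
  using val_block_eq_pos_blockD(2) val_block_eq_pos_block by blast

lemma val_start_eq: "i < m \<Longrightarrow> v i = s (\<sigma> i)"
  using val_block_eq_pos_blockD(1) val_block_eq_pos_block by blast

lemma \<alpha>_\<sigma>_\<alpha>:
  assumes "i < m" "k < l i"
  shows "\<alpha> (\<sigma> i) (\<alpha> i k) = k"
proof -
  have \<sigma>i: "\<sigma> i < m" using \<sigma>_less[OF assms(1)] .
  have "\<alpha> i k < l (\<sigma> i)"
    using permutes_in_image[OF \<alpha>_permutes[OF assms(1)]] assms length_\<sigma> by simp
  have "\<pi> (s i + k) = s (\<sigma> i) + \<alpha> i k"
    using inflation_blk_start_add[where l = l, OF assms] val_start_eq[OF assms(1)] by simp
  moreover have "\<pi> (s (\<sigma> i) + \<alpha> i k) = s i + \<alpha> (\<sigma> i) (\<alpha> i k)"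
    using inflation_blk_start_add[where l = l, OF \<sigma>i \<open>\<alpha> i k < l (\<sigma> i)\<close>] val_start_eq[OF \<sigma>i] \<sigma>_\<sigma> by simp
  ultimately have "s i + k = s i + \<alpha> (\<sigma> i) (\<alpha> i k)"
    using inflation_inflation by metis
  then show ?thesis by simp
qed

lemma \<alpha>_eq_inv: "i < m \<Longrightarrow> \<alpha> i = inv (\<alpha> (\<sigma> i))"
proof
  fix k assume "i < m"
  have "\<alpha> (\<sigma> i) (\<alpha> i k) = k"
  proof (cases "k < l i")
    case False
    then show ?thesis
      using \<open>i < m\<close> length_\<sigma> permutes_not_in[OF \<alpha>_permutes] \<sigma>_less by simp
  qed (use \<alpha>_\<sigma>_\<alpha> \<open>i < m\<close> in simp)
  then show "\<alpha> i k = inv (\<alpha> (\<sigma> i)) k"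
    using permutes_inv_eq[OF \<alpha>_permutes[OF \<sigma>_less[OF \<open>i < m\<close>]]] by metis
qed

end

theorem proposition5p1:
  fixes m :: nat and \<sigma> :: "nat \<Rightarrow> nat" and l :: "nat \<Rightarrow> nat"
    and \<alpha> :: "nat \<Rightarrow> nat \<Rightarrow> nat"
  assumes "m \<ge> 4"
    and "simple_perm m \<sigma>"
    and "\<forall>i<m. l i \<ge> 1 \<and> \<alpha> i permutes {..<l i}"
    and "involution (inflation m \<sigma> l \<alpha>)"
  shows "involution \<sigma> \<and> (\<forall>i<m. l i = l (\<sigma> i) \<and> \<alpha> i = inv (\<alpha> (\<sigma> i)))"
proof -
  interpret simple_involutive_inflation m \<sigma> l \<alpha>
    using assms by unfold_locales (auto simp: simple_perm_def)
  show ?thesis using involution_\<sigma> length_\<sigma> \<alpha>_eq_inv by simp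
qed

end
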